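(* For every distributed theory $\mathcal T$ and every universally consistent distributed belief pair $\mathcal B$, $\tau_{\mathit{beliefpair}}(D^*_{\mathcal T}(\mathcal B))=D^*_{\tau_{\mathit{theory}}(\mathcal T)}(\tau_{\mathit{beliefpair}}(\mathcal B))$.
   Context: Standing setup (dAEL). $\Sigma=\Sigma_o\uplus\Sigma_s$ is a first-order vocabulary (objective and subjective symbols). A nonempty domain $D$ and a $\Sigma_o$-structure $I_o$ with domain $D$ are fixed, as is a set of agents $\mathcal{A}\subseteq D$. For each $A\in\mathcal{A}$ there is a constant $A\in\Sigma_o$ with $A^{I_o}=A$, and $\Sigma_o$ contains a unary predicate $\mathrm{Apred}$ with $\mathrm{Apred}^{I_o}=\mathcal{A}$. "Structure" means a $\Sigma$-structure with domain $D$ that agrees with $I_o$ on $\Sigma_o$. Formulas of dAEL are built from atoms $P(\bar t)$ ($P\in\Sigma$ or equality) using $\wedge,\neg,\forall x$, and the modal rule: if $\varphi$ is a formula and $t$ a term then $K_t\varphi$ is a formula. Truth values are $\mathbf t,\mathbf f,\mathbf u$ with truth order $\mathbf f<_t\mathbf u<_t\mathbf t$; $\mathbf t^{-1}=\mathbf f$, $\mathbf f^{-1}=\mathbf t$, $\mathbf u^{-1}=\mathbf u$. A possible world structure (PWS) is a set of structures. A distributed possible world structure (DPWS) is a family $\mathcal Q=(\mathcal Q_A)_{A\in\mathcal A}$ of PWSs. A distributed belief pair (DBP) is a pair $\mathcal B=(\mathcal B^c,\mathcal B^l)$ of DPWSs, consistent if $\mathcal B^l_A\subseteq\mathcal B^c_A$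 for all $A$ (DBPs are tacitly consistent). A DPWS $\mathcal Q$ is universally consistent if $\mathcal Q_A\ne\emptyset$ for all $A$; a DBP $\mathcal B$ is universally consistent if $\mathcal B^l$ is. Three-valued value $\varphi^{\mathcal B,I,a}$: atoms get their two-valued value in $I$; $\neg$ by ${}^{-1}$, $\wedge$ and $\forall$ by $\le_t$-glb (Kleene); $(K_t\varphi)^{\mathcal B,I,a}$ is $\mathbf t$ if $t^{I,a}\in\mathcal A$ and $\varphi^{\mathcal B,J,a}=\mathbf t$ for all $J\in\mathcal B^c_{t^{I,a}}$; $\mathbf f$ if $t^{I,a}\notin\mathcal A$ or $\varphi^{\mathcal B,J,a}=\mathbf f$ for some $J\in\mathcal B^l_{t^{I,a}}$; $\mathbf u$ otherwise; for sentences the assignment is omitted and the value of a set of sentences is the $\le_t$-glb of the members' values. A distributed theory is a family $\mathcal T=(\mathcal T_A)_{A\in\mathcal A}$ of sets of dAEL sentences; $D^*_{\mathcal T}(\mathcal B)=(D^c_{\mathcal T}(\mathcal B),D^l_{\mathcal T}(\mathcal B))$ with $D^c_{\mathcal T}(\mathcal B)_A=\{I:\mathcal T_A^{\mathcal B,I}\ne\mathbf f\}$ and $D^l_{\mathcal T}(\mathcal B)_A=\{I:\mathcal T_A^{\mathcal B,I}=\mathbf t\}$. Translation to AEL. $\Sigma'$ consists of all symbols of $\Sigma_o$ and all symbols of $\Sigma_s$ with arity increased by one. A fixed element $\delta\in D$ is chosen. A $\Sigma'$-structure always has domain $D$, agrees with $I_o$ on $\Sigma_o$, and is normal: for every $f\in\Sigma_s$,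 $f^J(\bar d,d)=\delta$ whenever $d\notin\mathcal A$, and for every relation $R\in\Sigma_s$, $(\bar d,d)\notin R^J$ whenever $d\notin\mathcal A$. AEL formulas over $\Sigma'$ are built like dAEL formulas but with a single unindexed modal operator $K$; an AEL belief pair is a pair $(P,S)$ of sets of $\Sigma'$-structures; the three-valued AEL value is defined like the dAEL one except that $(K\varphi)^{(P,S),J,a}$ is $\mathbf t$ if $\varphi$ has value $\mathbf t$ at all $J'\in P$, $\mathbf f$ if it has value $\mathbf f$ at some $J'\in S$, and $\mathbf u$ otherwise. For an AEL theory $T$, $D^*_T(P,S)=(\{J:T^{(P,S),J}\ne\mathbf f\},\{J:T^{(P,S),J}=\mathbf t\})$. For a $\Sigma$-term $t$ and $\Sigma'$-term $s$, $t_s$ is defined by $x_s=x$ for variables, $f(t_1,\dots,t_n)_s=f((t_1)_s,\dots,(t_n)_s,s)$ for $f\in\Sigma_s$, $f(t_1,\dots,t_n)_s=f((t_1)_s,\dots,(t_n)_s)$ for $f\in\Sigma_o$. $\tau_{\mathit{formula}}(s,\cdot)$: $P(t_1,\dots,t_n)\mapsto P((t_1)_s,\dots,(t_n)_s,s)$ if $P\in\Sigma_s$, $P((t_1)_s,\dots,(t_n)_s)$ if $P\in\Sigma_o$ or equality; commutes with $\neg,\wedge,\forall x$; $\tau_{\mathit{formula}}(s,K_t\phi)=\exists x(x=t_s\wedge\mathrm{Apred}(x)\wedge K\,\tau_{\mathit{formula}}(x,\phi))$ for a fresh variable $x$. $\tau_{\mathit{theory}}(\mathcal T)=\bigcup_{A\in\mathcal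 A}\{\tau_{\mathit{formula}}(A,\phi):\phi\in\mathcal T_A\}$. For a family $(I_A)_{A\in\mathcal A}$ of structures, $\tau_{\mathit{structure}}((I_A)_A)$ is the $\Sigma'$-structure interpreting $\Sigma_o$ as $I_o$, each $f\in\Sigma_s$ by $f(\bar d,d)=f^{I_d}(\bar d)$ if $d\in\mathcal A$ and $\delta$ otherwise, and each relation $R\in\Sigma_s$ by $(\bar d,d)\in R$ iff $d\in\mathcal A$ and $\bar d\in R^{I_d}$. $\tau_{\mathit{pws}}(\mathcal Q)=\{\tau_{\mathit{structure}}((I_A)_A): I_A\in\mathcal Q_A\text{ for all }A\in\mathcal A\}$, and $\tau_{\mathit{beliefpair}}(\mathcal B)=(\tau_{\mathit{pws}}(\mathcal B^c),\tau_{\mathit{pws}}(\mathcal B^l))$. *)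

theory Defs
  imports Main
begin

record ('f,'p,'d) dsetup =
  farity :: "'f \<Rightarrow> nat"
  parity :: "'p \<Rightarrow> nat"
  fsubj  :: "'f set"
  psubj  :: "'p set"
  iof    :: "'f \<Rightarrow> 'd list \<Rightarrow> 'd"
  iop    :: "'p \<Rightarrow> 'd list set"
  agents :: "'d set"
  agc    :: "'d \<Rightarrow> 'f"
  apred  :: "'p"
  delta  :: "'d"

definition wf_setup :: "('f,'p,'d) dsetup \<Rightarrow> bool" where
  "wf_setup S \<longleftrightarrow>
     (\<forall>p. \<forall>ds \<in> iop S p. length ds = parity S p) \<and>
     (\<forall>A \<in> agents S. farity S (agc S A) = 0 \<and> agc S A \<notin> fsubj S \<and> iof S (agc S A) [] = A) \<and>
     parity S (apred S) = 1 \<and> apred S \<notin> psubj S \<and>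
     iop S (apred S) = {[d] | d. d \<in> agents S}"

text \<open>Values on argument lists of the wrong length are
 fixed to undefined (so that structures correspond exactly to the mathematical ones).\<close>

record ('f,'p,'d) struc =
  fint :: "'f \<Rightarrow> 'd list \<Rightarrow> 'd"
  pint :: "'p \<Rightarrow> 'd list set"

definition arity_ok :: "('f \<Rightarrow> nat) \<Rightarrow> ('p \<Rightarrow> nat) \<Rightarrow> ('f,'p,'d) struc \<Rightarrow> bool" where
  "arity_ok fa pa I \<longleftrightarrow>
     (\<forall>f ds. length ds \<noteq> fa f \<longrightarrow> fint I f ds = undefined) \<and>
     (\<forall>p. \<forall>ds \<in> pint I p. length ds = pa p)"

definition is_struct :: "('f,'p,'d) dsetup \<Rightarrow> ('f,'p,'d) struc \<Rightarrow> bool" where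
  "is_struct S I \<longleftrightarrow> arity_ok (farity S) (parity S) I \<and>
     (\<forall>f. f \<notin> fsubj S \<longrightarrow> (\<forall>ds. length ds = farity S f \<longrightarrow> fint I f ds = iof S f ds)) \<and>
     (\<forall>p. p \<notin> psubj S \<longrightarrow> pint I p = iop S p)"

definition farity' :: "('f,'p,'d) dsetup \<Rightarrow> 'f \<Rightarrow> nat" where
  "farity' S f = farity S f + (if f \<in> fsubj S then 1 else 0)"

definition parity' :: "('f,'p,'d) dsetup \<Rightarrow> 'p \<Rightarrow> nat" where
  "parity' S p = parity S p + (if p \<in> psubj S then 1 else 0)"

definition is_struct' :: "('f,'p,'d) dsetup \<Rightarrow> ('f,'p,'d) struc \<Rightarrow> bool" where
  "is_struct' S J \<longleftrightarrow> arity_ok (farity' S) (parity' S) J \<and>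
     (\<forall>f. f \<notin> fsubj S \<longrightarrow> (\<forall>ds. length ds = farity S f \<longrightarrow> fint J f ds = iof S f ds)) \<and>
     (\<forall>p. p \<notin> psubj S \<longrightarrow> pint J p = iop S p) \<and>
     (\<forall>f \<in> fsubj S. \<forall>ds d. length ds = farity S f \<longrightarrow> d \<notin> agents S \<longrightarrow>
         fint J f (ds @ [d]) = delta S) \<and>
     (\<forall>p \<in> psubj S. \<forall>ds d. d \<notin> agents S \<longrightarrow> ds @ [d] \<notin> pint J p)"

type_synonym ('f,'p,'d) pws = "('f,'p,'d) struc set"
type_synonym ('f,'p,'d) dpws = "'d \<Rightarrow> ('f,'p,'d) pws"
type_synonym ('f,'p,'d) dbp = "('f,'p,'d) dpws \<times> ('f,'p,'d) dpws"
type_synonym ('f,'p,'d) abp = "('f,'p,'d) pws \<times> ('f,'p,'d) pws"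

definition is_dbp :: "('f,'p,'d) dsetup \<Rightarrow> ('f,'p,'d) dbp \<Rightarrow> bool" where
  "is_dbp S B \<longleftrightarrow> (\<forall>A \<in> agents S. fst B A \<subseteq> {I. is_struct S I} \<and> snd B A \<subseteq> {I. is_struct S I})"

definition consistent_dbp :: "('f,'p,'d) dsetup \<Rightarrow> ('f,'p,'d) dbp \<Rightarrow> bool" where
  "consistent_dbp S B \<longleftrightarrow> (\<forall>A \<in> agents S. snd B A \<subseteq> fst B A)"

definition univ_consistent_dpws :: "('f,'p,'d) dsetup \<Rightarrow> ('f,'p,'d) dpws \<Rightarrow> bool" where
  "univ_consistent_dpws S Q \<longleftrightarrow> (\<forall>A \<in> agents S. Q A \<noteq> {})"

definition univ_consistent_dbp :: "('f,'p,'d) dsetup \<Rightarrow> ('f,'p,'d) dbp \<Rightarrow> bool" where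
  "univ_consistent_dbp S B \<longleftrightarrow> univ_consistent_dpws S (snd B)"

datatype 'f trm = Var nat | Fn 'f "'f trm list"

datatype ('f,'p) dform =
    DAtom 'p "'f trm list"
  | DEq "'f trm" "'f trm"
  | DNeg "('f,'p) dform"
  | DConj "('f,'p) dform" "('f,'p) dform"
  | DAll nat "('f,'p) dform"
  | DK "'f trm" "('f,'p) dform"

datatype ('f,'p) aform =
    AAtom 'p "'f trm list"
  | AEq "'f trm" "'f trm"
  | ANeg "('f,'p) aform"
  | AConj "('f,'p) aform" "('f,'p) aform"
  | AAll nat "('f,'p) aform"
  | AK "('f,'p) aform"

definition AEx :: "nat \<Rightarrow> ('f,'p) aform \<Rightarrow> ('f,'p) aform" where
  "AEx x \<psi> = ANeg (AAll x (ANeg \<psi>))"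

fun tvars :: "'f trm \<Rightarrow> nat set" where
  "tvars (Var x) = {x}"
| "tvars (Fn f ts) = (\<Union>t \<in> set ts. tvars t)"

primrec dvars :: "('f,'p) dform \<Rightarrow> nat set" where
  "dvars (DAtom p ts) = (\<Union>t \<in> set ts. tvars t)"
| "dvars (DEq t u) = tvars t \<union> tvars u"
| "dvars (DNeg \<phi>) = dvars \<phi>"
| "dvars (DConj \<phi> \<psi>) = dvars \<phi> \<union> dvars \<psi>"
| "dvars (DAll x \<phi>) = insert x (dvars \<phi>)"
| "dvars (DK t \<phi>) = tvars t \<union> dvars \<phi>"

primrec dfv :: "('f,'p) dform \<Rightarrow> nat set" where
  "dfv (DAtom p ts) = (\<Union>t \<in> set ts. tvars t)"
| "dfv (DEq t u) = tvars t \<union> tvars u"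
| "dfv (DNeg \<phi>) = dfv \<phi>"
| "dfv (DConj \<phi> \<psi>) = dfv \<phi> \<union> dfv \<psi>"
| "dfv (DAll x \<phi>) = dfv \<phi> - {x}"
| "dfv (DK t \<phi>) = tvars t \<union> dfv \<phi>"

fun wf_trm :: "('f \<Rightarrow> nat) \<Rightarrow> 'f trm \<Rightarrow> bool" where
  "wf_trm fa (Var x) = True"
| "wf_trm fa (Fn f ts) = (length ts = fa f \<and> (\<forall>t \<in> set ts. wf_trm fa t))"

primrec wf_dform :: "('f,'p,'d) dsetup \<Rightarrow> ('f,'p) dform \<Rightarrow> bool" where
  "wf_dform S (DAtom p ts) = (length ts = parity S p \<and> (\<forall>t \<in> set ts. wf_trm (farity S) t))"
| "wf_dform S (DEq t u) = (wf_trm (farity S) t \<and> wf_trm (farity S) u)"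
| "wf_dform S (DNeg \<phi>) = wf_dform S \<phi>"
| "wf_dform S (DConj \<phi> \<psi>) = (wf_dform S \<phi> \<and> wf_dform S \<psi>)"
| "wf_dform S (DAll x \<phi>) = wf_dform S \<phi>"
| "wf_dform S (DK t \<phi>) = (wf_trm (farity S) t \<and> wf_dform S \<phi>)"

definition dsentence :: "('f,'p,'d) dsetup \<Rightarrow> ('f,'p) dform \<Rightarrow> bool" where
  "dsentence S \<phi> \<longleftrightarrow> wf_dform S \<phi> \<and> dfv \<phi> = {}"

definition dist_theory :: "('f,'p,'d) dsetup \<Rightarrow> ('d \<Rightarrow> ('f,'p) dform set) \<Rightarrow> bool" where
  "dist_theory S T \<longleftrightarrow> (\<forall>A \<in> agents S. \<forall>\<phi> \<in> T A. dsentence S \<phi>)"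

datatype tv = TT | FF | UU

primrec tinv :: "tv \<Rightarrow> tv" where
  "tinv TT = FF" | "tinv FF = TT" | "tinv UU = UU"

text \<open>Greatest lower bound w.r.t. the truth order f < u < t (glb of the empty set is t).\<close>
definition glb :: "tv set \<Rightarrow> tv" where
  "glb X = (if FF \<in> X then FF else if UU \<in> X then UU else TT)"

fun teval :: "('f,'p,'d) struc \<Rightarrow> (nat \<Rightarrow> 'd) \<Rightarrow> 'f trm \<Rightarrow> 'd" where
  "teval I a (Var x) = a x"
| "teval I a (Fn f ts) = fint I f (map (teval I a) ts)"

primrec dval :: "('f,'p,'d) dsetup \<Rightarrow> ('f,'p,'d) dbp \<Rightarrow> ('f,'p,'d) struc \<Rightarrow> (nat \<Rightarrow> 'd)
                   \<Rightarrow> ('f,'p) dform \<Rightarrow> tv" where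
  "dval S B I a (DAtom p ts) = (if map (teval I a) ts \<in> pint I p then TT else FF)"
| "dval S B I a (DEq t u) = (if teval I a t = teval I a u then TT else FF)"
| "dval S B I a (DNeg \<phi>) = tinv (dval S B I a \<phi>)"
| "dval S B I a (DConj \<phi> \<psi>) = glb {dval S B I a \<phi>, dval S B I a \<psi>}"
| "dval S B I a (DAll x \<phi>) = glb ((\<lambda>d. dval S B I (a(x := d)) \<phi>) ` UNIV)"
| "dval S B I a (DK t \<phi>) =
     (let A = teval I a t in
      if A \<in> agents S \<and> (\<forall>J \<in> fst B A. dval S B J a \<phi> = TT) then TT
      else if A \<notin> agents S \<or> (\<exists>J \<in> snd B A. dval S B J a \<phi> = FF) then FF
      else UU)"

definition dsval :: "('f,'p,'d) dsetup \<Rightarrow> ('f,'p,'d) dbp \<Rightarrow> ('f,'p,'d) struc \<Rightarrow> ('f,'p) dform \<Rightarrow> tv" where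
  "dsval S B I \<phi> = dval S B I (\<lambda>_. undefined) \<phi>"

definition dtval :: "('f,'p,'d) dsetup \<Rightarrow> ('f,'p,'d) dbp \<Rightarrow> ('f,'p,'d) struc \<Rightarrow> ('f,'p) dform set \<Rightarrow> tv" where
  "dtval S B I Th = glb (dsval S B I ` Th)"

definition Dstar :: "('f,'p,'d) dsetup \<Rightarrow> ('d \<Rightarrow> ('f,'p) dform set) \<Rightarrow> ('f,'p,'d) dbp \<Rightarrow> ('f,'p,'d) dbp" where
  "Dstar S T B = ((\<lambda>A. {I. is_struct S I \<and> dtval S B I (T A) \<noteq> FF}),
                  (\<lambda>A. {I. is_struct S I \<and> dtval S B I (T A) = TT}))"

primrec aval :: "('f,'p,'d) abp \<Rightarrow> ('f,'p,'d) struc \<Rightarrow> (nat \<Rightarrow> 'd) \<Rightarrow> ('f,'p) aform \<Rightarrow> tv" where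
  "aval PS J a (AAtom p ts) = (if map (teval J a) ts \<in> pint J p then TT else FF)"
| "aval PS J a (AEq t u) = (if teval J a t = teval J a u then TT else FF)"
| "aval PS J a (ANeg \<phi>) = tinv (aval PS J a \<phi>)"
| "aval PS J a (AConj \<phi> \<psi>) = glb {aval PS J a \<phi>, aval PS J a \<psi>}"
| "aval PS J a (AAll x \<phi>) = glb ((\<lambda>d. aval PS J (a(x := d)) \<phi>) ` UNIV)"
| "aval PS J a (AK \<phi>) =
     (if (\<forall>J' \<in> fst PS. aval PS J' a \<phi> = TT) then TT
      else if (\<exists>J' \<in> snd PS. aval PS J' a \<phi> = FF) then FF
      else UU)"

definition asval :: "('f,'p,'d) abp \<Rightarrow> ('f,'p,'d) struc \<Rightarrow> ('f,'p) aform \<Rightarrow> tv" where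
  "asval PS J \<phi> = aval PS J (\<lambda>_. undefined) \<phi>"

definition atval :: "('f,'p,'d) abp \<Rightarrow> ('f,'p,'d) struc \<Rightarrow> ('f,'p) aform set \<Rightarrow> tv" where
  "atval PS J Th = glb (asval PS J ` Th)"

definition Astar :: "('f,'p,'d) dsetup \<Rightarrow> ('f,'p) aform set \<Rightarrow> ('f,'p,'d) abp \<Rightarrow> ('f,'p,'d) abp" where
  "Astar S Th PS = ({J. is_struct' S J \<and> atval PS J Th \<noteq> FF},
                    {J. is_struct' S J \<and> atval PS J Th = TT})"

fun tr_term :: "('f,'p,'d) dsetup \<Rightarrow> 'f trm \<Rightarrow> 'f trm \<Rightarrow> 'f trm" where
  "tr_term S s (Var x) = Var x"
| "tr_term S s (Fn f ts) = Fn f (map (tr_term S s) ts @ (if f \<in> fsubj S then [s] else []))"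

definition fresh :: "nat set \<Rightarrow> nat" where
  "fresh V = Suc (Max (insert 0 V))"

primrec tr_form :: "('f,'p,'d) dsetup \<Rightarrow> 'f trm \<Rightarrow> ('f,'p) dform \<Rightarrow> ('f,'p) aform" where
  "tr_form S s (DAtom p ts) = AAtom p (map (tr_term S s) ts @ (if p \<in> psubj S then [s] else []))"
| "tr_form S s (DEq t u) = AEq (tr_term S s t) (tr_term S s u)"
| "tr_form S s (DNeg \<phi>) = ANeg (tr_form S s \<phi>)"
| "tr_form S s (DConj \<phi> \<psi>) = AConj (tr_form S s \<phi>) (tr_form S s \<psi>)"
| "tr_form S s (DAll x \<phi>) = AAll x (tr_form S s \<phi>)"
| "tr_form S s (DK t \<phi>) =
     (let x = fresh (tvars s \<union> tvars t \<union> dvars \<phi>) in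
      AEx x (AConj (AEq (Var x) (tr_term S s t))
                   (AConj (AAtom (apred S) [Var x]) (AK (tr_form S (Var x) \<phi>)))))"

definition tr_theory :: "('f,'p,'d) dsetup \<Rightarrow> ('d \<Rightarrow> ('f,'p) dform set) \<Rightarrow> ('f,'p) aform set" where
  "tr_theory S T = (\<Union>A \<in> agents S. tr_form S (Fn (agc S A) []) ` T A)"

definition tr_structure :: "('f,'p,'d) dsetup \<Rightarrow> ('d \<Rightarrow> ('f,'p,'d) struc) \<Rightarrow> ('f,'p,'d) struc" where
  "tr_structure S I =
     \<lparr> fint = (\<lambda>f ds.
          if f \<in> fsubj S then
            (if length ds = farity S f + 1 then
               (if last ds \<in> agents S then fint (I (last ds)) f (butlast ds) else delta S)
             else undefined)
          else (if length ds = farity S f then iof S f ds else undefined)),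
       pint = (\<lambda>p.
          if p \<in> psubj S then
            {ds. length ds = parity S p + 1 \<and> last ds \<in> agents S \<and> butlast ds \<in> pint (I (last ds)) p}
          else iop S p) \<rparr>"

definition tr_pws :: "('f,'p,'d) dsetup \<Rightarrow> ('f,'p,'d) dpws \<Rightarrow> ('f,'p,'d) pws" where
  "tr_pws S Q = {tr_structure S I | I. \<forall>A \<in> agents S. I A \<in> Q A}"

definition tr_bp :: "('f,'p,'d) dsetup \<Rightarrow> ('f,'p,'d) dbp \<Rightarrow> ('f,'p,'d) abp" where
  "tr_bp S B = (tr_pws S (fst B), tr_pws S (snd B))"

end

theory Submission
  imports Defs
begin

text \<open>
  The translation of structures is a bijection between agent-indexed families of
  \<open>\<Sigma>\<close>-structures and normal \<open>\<Sigma>'\<close>-structures: its inverse reads off agent \<open>A\<close>'s structure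
  from \<open>J\<close> by fixing the extra argument of every subjective symbol to \<open>A\<close>. Under this bijection
  the value of \<open>\<tau>(s, \<phi>)\<close> in \<open>\<tau>(I)\<close> is the value of \<open>\<phi>\<close> in \<open>I\<^sub>A\<close>, where \<open>A\<close> is the agent
  denoted by \<open>s\<close>. The only interesting case is \<open>K\<^sub>t \<phi>\<close>: the existential quantifier of its
  translation selects the agent \<open>A'\<close> denoted by \<open>t\<close>, and the worlds of \<open>\<tau>(\<B>)\<close> seen through
  their \<open>A'\<close>-components are exactly the worlds of \<open>\<B>\<^sub>A\<^sub>'\<close>. This needs universal consistency,
  since a product of sets projects onto each factor only when no factor is empty.
  Consequently the translated theory has, at \<open>J\<close>, the glb of the values of the \<open>\<T>\<^sub>A\<close> at the
  components of \<open>J\<close>, and both components of \<open>D*\<close> commute with the translation.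
\<close>

lemma fint_tr_structure:
  "fint (tr_structure S I) f ds =
     (if f \<in> fsubj S then
        (if length ds = farity S f + 1 then
           (if last ds \<in> agents S then fint (I (last ds)) f (butlast ds) else delta S)
         else undefined)
      else (if length ds = farity S f then iof S f ds else undefined))"
  by (simp add: tr_structure_def)

lemma pint_tr_structure:
  "pint (tr_structure S I) p =
     (if p \<in> psubj S then
        {ds. length ds = parity S p + 1 \<and> last ds \<in> agents S \<and> butlast ds \<in> pint (I (last ds)) p}
      else iop S p)"
  by (simp add: tr_structure_def)

definition agent_slice :: "('f,'p,'d) dsetup \<Rightarrow> ('f,'p,'d) struc \<Rightarrow> 'd \<Rightarrow> ('f,'p,'d) struc" where
  "agent_slice S J A =
     \<lparr> fint = (\<lambda>f ds. if f \<in> fsubj S then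
                        (if length ds = farity S f then fint J f (ds @ [A]) else undefined)
                      else fint J f ds),
       pint = (\<lambda>p. if p \<in> psubj S then {ds. ds @ [A] \<in> pint J p} else pint J p) \<rparr>"

lemma is_struct'_tr_structure:
  assumes "wf_setup S"
  shows "is_struct' S (tr_structure S I)"
  using assms by (auto simp: is_struct'_def arity_ok_def fint_tr_structure pint_tr_structure
      farity'_def parity'_def wf_setup_def)

lemma is_struct_agent_slice:
  assumes "is_struct' S J"
  shows "is_struct S (agent_slice S J A)"
proof -
  have ar: "arity_ok (farity' S) (parity' S) J"
    and obj_f: "\<forall>f. f \<notin> fsubj S \<longrightarrow> (\<forall>ds. length ds = farity S f \<longrightarrow> fint J f ds = iof S f ds)"
    and obj_p: "\<forall>p. p \<notin> psubj S \<longrightarrow> pint J p = iop S p"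
    using assms by (simp_all add: is_struct'_def)
  have "length ds = parity S p" if "p \<in> psubj S" "ds @ [A] \<in> pint J p" for p ds
    using ar that unfolding arity_ok_def parity'_def by fastforce
  moreover have "length ds = parity S p" if "p \<notin> psubj S" "ds \<in> pint J p" for p ds
    using ar that by (auto simp: arity_ok_def parity'_def)
  moreover have "fint J f ds = undefined" if "f \<notin> fsubj S" "length ds \<noteq> farity S f" for f ds
    using ar that by (auto simp: arity_ok_def farity'_def)
  ultimately show ?thesis
    using obj_f obj_p by (auto simp: is_struct_def arity_ok_def agent_slice_def)
qed

lemma fint_tr_structure_agent_slice:
  assumes "is_struct' S J"
  shows "fint (tr_structure S (agent_slice S J)) f ds = fint J f ds"
proof (cases "f \<in> fsubj S \<and> length ds = farity S f + 1")
  case True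
  then have snoc: "butlast ds @ [last ds] = ds" by (intro append_butlast_last_id) auto
  have "fint J f (butlast ds @ [last ds]) = delta S" if "last ds \<notin> agents S"
    using assms True that by (simp add: is_struct'_def)
  then show ?thesis using True by (simp add: fint_tr_structure agent_slice_def snoc)
next
  case False
  then show ?thesis
    using assms by (auto simp: fint_tr_structure is_struct'_def arity_ok_def farity'_def)
qed

lemma mem_pint_subj_iff:
  assumes "is_struct' S J" and "p \<in> psubj S"
  shows "ds \<in> pint J p \<longleftrightarrow>
         length ds = parity S p + 1 \<and> last ds \<in> agents S \<and> butlast ds @ [last ds] \<in> pint J p"
proof (cases "length ds = parity S p + 1")
  case True
  then have snoc: "butlast ds @ [last ds] = ds" by (intro append_butlast_last_id) auto
  have "butlast ds @ [last ds] \<notin> pint J p" if "last ds \<notin> agents S"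
    using assms that by (simp add: is_struct'_def)
  then show ?thesis using True snoc by auto
next
  case False
  then show ?thesis using assms by (auto simp: is_struct'_def arity_ok_def parity'_def)
qed

lemma tr_structure_agent_slice:
  assumes "is_struct' S J"
  shows "tr_structure S (agent_slice S J) = J"
proof (rule struc.equality)
  show "fint (tr_structure S (agent_slice S J)) = fint J"
    using assms by (intro ext) (rule fint_tr_structure_agent_slice)
  have "pint (tr_structure S (agent_slice S J)) p = pint J p" for p
  proof (cases "p \<in> psubj S")
    case True
    then have "pint (tr_structure S (agent_slice S J)) p =
        {ds. length ds = parity S p + 1 \<and> last ds \<in> agents S \<and> butlast ds @ [last ds] \<in> pint J p}"
      by (simp add: pint_tr_structure agent_slice_def)
    also have "\<dots> = pint J p" using mem_pint_subj_iff[OF assms True] by blast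
    finally show ?thesis .
  qed (use assms in \<open>simp add: pint_tr_structure agent_slice_def is_struct'_def\<close>)
  then show "pint (tr_structure S (agent_slice S J)) = pint J" ..
qed simp

lemma agent_slice_tr_structure:
  assumes "is_struct S (I A)" "A \<in> agents S"
  shows "agent_slice S (tr_structure S I) A = I A"
proof (rule struc.equality)
  show "fint (agent_slice S (tr_structure S I) A) = fint (I A)"
    using assms by (intro ext) (auto simp: agent_slice_def fint_tr_structure is_struct_def arity_ok_def)
  show "pint (agent_slice S (tr_structure S I) A) = pint (I A)"
    using assms by (intro ext) (auto simp: agent_slice_def pint_tr_structure is_struct_def arity_ok_def)
qed simp

lemma tr_pws_Collect:
  assumes "wf_setup S"
  shows "tr_pws S (\<lambda>A. {I. is_struct S I \<and> P A I}) =
         {J. is_struct' S J \<and> (\<forall>A \<in> agents S. P A (agent_slice S J A))}"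
proof (intro equalityI subsetI)
  fix J assume "J \<in> tr_pws S (\<lambda>A. {I. is_struct S I \<and> P A I})"
  then obtain I where J: "J = tr_structure S I" and I: "\<forall>A \<in> agents S. is_struct S (I A) \<and> P A (I A)"
    by (auto simp: tr_pws_def)
  have "\<forall>A \<in> agents S. P A (agent_slice S J A)"
    unfolding J using I agent_slice_tr_structure by metis
  then show "J \<in> {J. is_struct' S J \<and> (\<forall>A \<in> agents S. P A (agent_slice S J A))}"
    using assms by (simp add: J is_struct'_tr_structure)
next
  fix J assume J: "J \<in> {J. is_struct' S J \<and> (\<forall>A \<in> agents S. P A (agent_slice S J A))}"
  show "J \<in> tr_pws S (\<lambda>A. {I. is_struct S I \<and> P A I})"
    unfolding tr_pws_def
  proof (intro CollectI exI[of _ "agent_slice S J"] conjI)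
    show "J = tr_structure S (agent_slice S J)"
      using J by (simp add: tr_structure_agent_slice)
    show "\<forall>A \<in> agents S. agent_slice S J A \<in> {I. is_struct S I \<and> P A I}"
      using J by (simp add: is_struct_agent_slice)
  qed
qed

text \<open>The other components of the witness family are chosen arbitrarily, hence nonemptiness.\<close>

lemma tr_pws_image:
  assumes "univ_consistent_dpws S Q" and "A \<in> agents S"
    and "\<And>I. \<forall>A \<in> agents S. I A \<in> Q A \<Longrightarrow> g (tr_structure S I) = h (I A)"
  shows "g ` tr_pws S Q = h ` Q A"
proof
  show "g ` tr_pws S Q \<subseteq> h ` Q A"
    using assms(2,3) by (auto simp: tr_pws_def)
  show "h ` Q A \<subseteq> g ` tr_pws S Q"
  proof
    fix v assume "v \<in> h ` Q A"
    then obtain K where K: "K \<in> Q A" "v = h K" by auto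
    define I where "I = (\<lambda>A'. if A' = A then K else (SOME K'. K' \<in> Q A'))"
    have I: "\<forall>A' \<in> agents S. I A' \<in> Q A'"
      using assms(1) K by (auto simp: I_def univ_consistent_dpws_def some_in_eq)
    then have "tr_structure S I \<in> tr_pws S Q" by (auto simp: tr_pws_def)
    moreover have "v = g (tr_structure S I)" using assms(3)[OF I] K by (simp add: I_def)
    ultimately show "v \<in> g ` tr_pws S Q" by blast
  qed
qed

lemma finite_tvars: "finite (tvars t)"
  by (induction t) auto

lemma finite_dvars: "finite (dvars \<phi>)"
  by (induction \<phi>) (auto simp: finite_tvars)

lemma fresh_notin: "finite V \<Longrightarrow> fresh V \<notin> V"
  unfolding fresh_def using Max_ge[of "insert 0 V"] by fastforce

lemma tvars_tr_term: "tvars (tr_term S s t) \<subseteq> tvars s \<union> tvars t"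
  by (induction t) auto

lemma teval_cong: "(\<And>x. x \<in> tvars t \<Longrightarrow> a x = b x) \<Longrightarrow> teval I a t = teval I b t"
proof (induction t)
  case (Fn f ts)
  then have "map (teval I a) ts = map (teval I b) ts" by auto
  then show ?case by (simp only: teval.simps)
qed simp

lemma dval_cong: "(\<And>x. x \<in> dvars \<phi> \<Longrightarrow> a x = b x) \<Longrightarrow> dval S B I a \<phi> = dval S B I b \<phi>"
proof (induction \<phi> arbitrary: I a b)
  case (DAtom p ts)
  then have "map (teval I a) ts = map (teval I b) ts" by (auto intro: teval_cong)
  then show ?case by (simp only: dval.simps)
next
  case (DEq t u)
  then show ?case using teval_cong[of t a b I] teval_cong[of u a b I] by simp
next
  case (DNeg \<phi>)
  have "dval S B I a \<phi> = dval S B I b \<phi>" using DNeg.prems by (intro DNeg.IH) simp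
  then show ?case by (simp only: dval.simps)
next
  case (DConj \<phi> \<psi>)
  have "dval S B I a \<phi> = dval S B I b \<phi>" "dval S B I a \<psi> = dval S B I b \<psi>"
    using DConj.prems by (intro DConj.IH; simp)+
  then show ?case by (simp only: dval.simps)
next
  case (DAll x \<phi>)
  have "dval S B I (a(x := d)) \<phi> = dval S B I (b(x := d)) \<phi>" for d
    using DAll.prems by (intro DAll.IH) simp
  then show ?case by (simp only: dval.simps)
next
  case (DK t \<phi>)
  have "teval I a t = teval I b t" using DK.prems by (intro teval_cong) simp
  moreover have "dval S B J a \<phi> = dval S B J b \<phi>" for J using DK.prems by (intro DK.IH) simp
  ultimately show ?case by (simp add: Let_def)
qed

lemma glb_eq_FF_iff: "glb X = FF \<longleftrightarrow> FF \<in> X"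
  by (simp add: glb_def)

lemma glb_eq_TT_iff: "glb X = TT \<longleftrightarrow> (\<forall>v \<in> X. v = TT)"
  unfolding glb_def by (metis tv.exhaust tv.distinct)

lemma glb_insert_TT: "glb {TT, v} = v"
  by (cases v) (simp_all add: glb_def)

lemma glb_insert_FF: "glb {FF, v} = FF"
  by (simp add: glb_def)

lemma tinv_tinv [simp]: "tinv (tinv v) = v"
  by (cases v) simp_all

lemma glb_image_if_TT: "glb ((\<lambda>d. if d = c then v else TT) ` UNIV) = v"
proof -
  have "(\<lambda>d. if d = c then v else TT) ` UNIV \<subseteq> {TT, v}" and "v \<in> (\<lambda>d. if d = c then v else TT) ` UNIV"
    by (auto intro: image_eqI[of _ _ c])
  then show ?thesis by (cases v) (auto simp: glb_def)
qed

lemma fint_tr_structure_agent: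
  assumes "is_struct S (I A)" and "A \<in> agents S"
  shows "fint (tr_structure S I) f (ds @ (if f \<in> fsubj S then [A] else [])) = fint (I A) f ds"
  using assms by (auto simp: fint_tr_structure is_struct_def arity_ok_def)

lemma pint_tr_structure_agent:
  assumes "is_struct S (I A)" and "A \<in> agents S"
  shows "ds @ (if p \<in> psubj S then [A] else []) \<in> pint (tr_structure S I) p \<longleftrightarrow> ds \<in> pint (I A) p"
  using assms by (auto simp: pint_tr_structure is_struct_def arity_ok_def)

lemma teval_tr_term:
  assumes "is_struct S (I A)" and "A \<in> agents S" and "teval (tr_structure S I) a s = A"
  shows "teval (tr_structure S I) a (tr_term S s t) = teval (I A) a t"
proof (induction t)
  case (Fn f ts)
  have "teval (tr_structure S I) a (tr_term S s (Fn f ts)) =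
        fint (tr_structure S I) f (map (teval (I A) a) ts @ (if f \<in> fsubj S then [A] else []))"
    using Fn assms(3) by (simp cong: map_cong)
  also have "\<dots> = teval (I A) a (Fn f ts)"
    using fint_tr_structure_agent[of S I A, OF assms(1,2)] by simp
  finally show ?case .
qed simp

lemma aval_AEx_agent:
  assumes "\<And>d. teval J (a(x := d)) u = A"
    and "pint J (apred S) = {[d] | d. d \<in> agents S}"
  shows "aval PS J a (AEx x (AConj (AEq (Var x) u) (AConj (AAtom (apred S) [Var x]) \<psi>))) =
         (if A \<in> agents S then aval PS J (a(x := A)) \<psi> else FF)"
proof -
  define \<psi>' where "\<psi>' = AConj (AEq (Var x) u) (AConj (AAtom (apred S) [Var x]) \<psi>)"
  have "aval PS J (a(x := d)) \<psi>' = (if d = A \<and> A \<in> agents S then aval PS J (a(x := A)) \<psi> else FF)" for d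
    using assms by (auto simp: \<psi>'_def glb_insert_TT glb_insert_FF)
  then have "aval PS J a (AEx x \<psi>') =
             tinv (glb ((\<lambda>d. tinv (if d = A \<and> A \<in> agents S then aval PS J (a(x := A)) \<psi> else FF)) ` UNIV))"
    by (simp only: AEx_def aval.simps)
  also have "\<dots> = (if A \<in> agents S then aval PS J (a(x := A)) \<psi> else FF)"
  proof (cases "A \<in> agents S")
    case True
    have "(\<lambda>d. tinv (if d = A \<and> A \<in> agents S then aval PS J (a(x := A)) \<psi> else FF)) =
          (\<lambda>d. if d = A then tinv (aval PS J (a(x := A)) \<psi>) else TT)"
      using True by auto
    then show ?thesis using True by (simp only: glb_image_if_TT tinv_tinv if_True)
  qed (simp add: glb_def)
  finally show ?thesis unfolding \<psi>'_def .
qed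

lemma image_eq_imp_Ball_Bex_iff:
  assumes "g ` X = h ` Y"
  shows "(\<forall>x \<in> X. P (g x)) \<longleftrightarrow> (\<forall>y \<in> Y. P (h y))" and "(\<exists>x \<in> X. P (g x)) \<longleftrightarrow> (\<exists>y \<in> Y. P (h y))"
proof -
  have "(\<forall>v \<in> g ` X. P v) \<longleftrightarrow> (\<forall>v \<in> h ` Y. P v)" and "(\<exists>v \<in> g ` X. P v) \<longleftrightarrow> (\<exists>v \<in> h ` Y. P v)"
    by (simp_all only: assms)
  then show "(\<forall>x \<in> X. P (g x)) \<longleftrightarrow> (\<forall>y \<in> Y. P (h y))" and "(\<exists>x \<in> X. P (g x)) \<longleftrightarrow> (\<exists>y \<in> Y. P (h y))"
    by simp_all
qed

lemma aval_AK_tr_bp: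
  assumes "is_dbp S B" and "univ_consistent_dpws S (fst B)" and "univ_consistent_dpws S (snd B)"
    and "A \<in> agents S" and "teval K b t = A"
    and IH: "\<And>I. \<forall>A \<in> agents S. is_struct S (I A) \<Longrightarrow>
               aval (tr_bp S B) (tr_structure S I) a \<chi> = dval S B (I A) b \<phi>"
  shows "aval (tr_bp S B) J a (AK \<chi>) = dval S B K b (DK t \<phi>)"
proof -
  define g where "g J' = aval (tr_bp S B) J' a \<chi>" for J'
  define h where "h K' = dval S B K' b \<phi>" for K'
  have "g ` tr_pws S Q = h ` Q A" if "univ_consistent_dpws S Q" "Q = fst B \<or> Q = snd B" for Q
  proof (rule tr_pws_image[OF that(1) \<open>A \<in> agents S\<close>])
    fix I assume "\<forall>A \<in> agents S. I A \<in> Q A"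
    then have "\<forall>A \<in> agents S. is_struct S (I A)"
      using \<open>is_dbp S B\<close> that(2) by (auto simp: is_dbp_def)
    then show "g (tr_structure S I) = h (I A)" by (simp add: g_def h_def IH)
  qed
  then have "g ` tr_pws S (fst B) = h ` fst B A" and "g ` tr_pws S (snd B) = h ` snd B A"
    using assms(2,3) by blast+
  then show ?thesis
    using assms(4,5) image_eq_imp_Ball_Bex_iff[of g _ h, where P = "\<lambda>v. v = TT"]
      image_eq_imp_Ball_Bex_iff[of g _ h, where P = "\<lambda>v. v = FF"]
    by (simp add: tr_bp_def g_def h_def Let_def)
qed

lemma aval_tr_form_DK:
  assumes "wf_setup S" and "is_struct S (I A)" and "A \<in> agents S"
    and "teval (tr_structure S I) a s = A"
    and x: "x = fresh (tvars s \<union> tvars t \<union> dvars \<phi>)"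
  shows "aval PS (tr_structure S I) a (tr_form S s (DK t \<phi>)) =
         (if teval (I A) a t \<in> agents S
          then aval PS (tr_structure S I) (a(x := teval (I A) a t)) (AK (tr_form S (Var x) \<phi>))
          else FF)"
proof -
  have "x \<notin> tvars s \<union> tvars t \<union> dvars \<phi>"
    unfolding x by (rule fresh_notin) (simp add: finite_tvars finite_dvars)
  then have "teval (tr_structure S I) (a(x := d)) (tr_term S s t) = teval (tr_structure S I) a (tr_term S s t)"
    for d using tvars_tr_term[of S s t] by (intro teval_cong) auto
  also have "teval (tr_structure S I) a (tr_term S s t) = teval (I A) a t"
    using assms(2-4) by (rule teval_tr_term)
  finally have "teval (tr_structure S I) (a(x := d)) (tr_term S s t) = teval (I A) a t" for d .
  moreover have "pint (tr_structure S I) (apred S) = {[d] | d. d \<in> agents S}"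
    using \<open>wf_setup S\<close> by (simp add: wf_setup_def pint_tr_structure)
  ultimately show ?thesis
    unfolding tr_form.simps Let_def x[symmetric] by (rule aval_AEx_agent)
qed

lemma aval_tr_form:
  assumes "wf_setup S" and "is_dbp S B"
    and "univ_consistent_dpws S (fst B)" and "univ_consistent_dpws S (snd B)"
  shows "\<lbrakk>\<forall>A \<in> agents S. is_struct S (I A); A \<in> agents S; teval (tr_structure S I) a s = A;
          tvars s \<inter> dvars \<phi> = {}\<rbrakk> \<Longrightarrow>
         aval (tr_bp S B) (tr_structure S I) a (tr_form S s \<phi>) = dval S B (I A) a \<phi>"
proof (induction \<phi> arbitrary: I A a s)
  case (DAtom p ts)
  then have "map (teval (tr_structure S I) a) (map (tr_term S s) ts @ (if p \<in> psubj S then [s] else [])) =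
            map (teval (I A) a) ts @ (if p \<in> psubj S then [A] else [])"
    using teval_tr_term[of S I A a s] by (simp cong: map_cong)
  then show ?case
    using DAtom.prems pint_tr_structure_agent[of S I A "map (teval (I A) a) ts" p]
    by (simp only: tr_form.simps aval.simps dval.simps)
next
  case (DEq t u)
  then show ?case using teval_tr_term[of S I A a s] by simp
next
  case (DNeg \<phi>)
  then show ?case by simp
next
  case (DConj \<phi> \<psi>)
  have "aval (tr_bp S B) (tr_structure S I) a (tr_form S s \<phi>) = dval S B (I A) a \<phi>"
    and "aval (tr_bp S B) (tr_structure S I) a (tr_form S s \<psi>) = dval S B (I A) a \<psi>"
    using DConj.prems by (intro DConj.IH; auto)+
  then show ?case by simp
next
  case (DAll x \<phi>)
  have "teval (tr_structure S I) (a(x := d)) s = teval (tr_structure S I) a s" for d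
    using DAll.prems(4) by (intro teval_cong) auto
  then have "teval (tr_structure S I) (a(x := d)) s = A" for d
    using DAll.prems(3) by simp
  then have "aval (tr_bp S B) (tr_structure S I) (a(x := d)) (tr_form S s \<phi>) = dval S B (I A) (a(x := d)) \<phi>"
    for d using DAll.prems(1,2,4) by (intro DAll.IH) (auto simp del: fun_upd_apply)
  then show ?case by simp
next
  case (DK t \<phi>)
  define x where "x = fresh (tvars s \<union> tvars t \<union> dvars \<phi>)"
  have x: "x \<notin> tvars s \<union> tvars t \<union> dvars \<phi>"
    unfolding x_def by (rule fresh_notin) (simp add: finite_tvars finite_dvars)
  define A' where "A' = teval (I A) a t"
  have "aval (tr_bp S B) (tr_structure S I) a (tr_form S s (DK t \<phi>)) =
      (if A' \<in> agents S then aval (tr_bp S B) (tr_structure S I) (a(x := A')) (AK (tr_form S (Var x) \<phi>)) else FF)"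
    unfolding A'_def using DK.prems assms(1) x_def by (intro aval_tr_form_DK) auto
  also have "\<dots> = dval S B (I A) a (DK t \<phi>)"
  proof (cases "A' \<in> agents S")
    case True
    have "aval (tr_bp S B) (tr_structure S I') (a(x := A')) (tr_form S (Var x) \<phi>) = dval S B (I' A') a \<phi>"
      if "\<forall>A \<in> agents S. is_struct S (I' A)" for I'
    proof -
      have "aval (tr_bp S B) (tr_structure S I') (a(x := A')) (tr_form S (Var x) \<phi>) =
            dval S B (I' A') (a(x := A')) \<phi>"
        using that True x by (intro DK.IH) auto
      also have "\<dots> = dval S B (I' A') a \<phi>" using x by (intro dval_cong) auto
      finally show ?thesis .
    qed
    then show ?thesis
      using aval_AK_tr_bp[OF assms(2-4) True] by (simp add: A'_def)
  qed (simp add: A'_def Let_def)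
  finally show ?case .
qed

lemma atval_tr_theory:
  assumes "wf_setup S" and "is_dbp S B"
    and "univ_consistent_dpws S (fst B)" and "univ_consistent_dpws S (snd B)"
    and "is_struct' S J"
  shows "atval (tr_bp S B) J (tr_theory S T) = glb (\<Union>A \<in> agents S. dsval S B (agent_slice S J A) ` T A)"
proof -
  have J: "tr_structure S (agent_slice S J) = J"
    using assms(5) by (rule tr_structure_agent_slice)
  have "asval (tr_bp S B) J (tr_form S (Fn (agc S A) []) \<phi>) = dsval S B (agent_slice S J A) \<phi>"
    if "A \<in> agents S" for A \<phi>
  proof -
    have "teval J (\<lambda>_. undefined) (Fn (agc S A) []) = A"
      using assms(1,5) that by (simp add: wf_setup_def is_struct'_def)
    then show ?thesis
      unfolding asval_def dsval_def
      using aval_tr_form[OF assms(1-4), of "agent_slice S J" A] is_struct_agent_slice[OF assms(5)] that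
      by (simp add: J)
  qed
  then show ?thesis
    unfolding atval_def tr_theory_def image_UN image_image by simp
qed

theorem mainTheorem11:
  fixes S :: "('f,'p,'d) dsetup"
    and T :: "'d \<Rightarrow> ('f,'p) dform set"
    and B :: "('f,'p,'d) dbp"
  assumes "wf_setup S"
    and "dist_theory S T"
    and "is_dbp S B"
    and "consistent_dbp S B"
    and "univ_consistent_dbp S B"
  shows "tr_bp S (Dstar S T B) = Astar S (tr_theory S T) (tr_bp S B)"
proof -
  have "univ_consistent_dpws S (snd B)"
    using assms(5) by (simp add: univ_consistent_dbp_def)
  moreover from this have "univ_consistent_dpws S (fst B)"
    using assms(4) by (auto simp: univ_consistent_dpws_def consistent_dbp_def)
  ultimately have atval_eq: "atval (tr_bp S B) J (tr_theory S T) =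
      glb (\<Union>A \<in> agents S. dsval S B (agent_slice S J A) ` T A)" if "is_struct' S J" for J
    using atval_tr_theory[OF assms(1,3) _ _ that] by blast
  show ?thesis
    unfolding tr_bp_def[of S "Dstar S T B"]
    unfolding Dstar_def Astar_def fst_conv snd_conv tr_pws_Collect[OF assms(1)]
    by (force simp: atval_eq dtval_def glb_eq_FF_iff glb_eq_TT_iff)
qed

end
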